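(* Assume Condition (C) and $\lambda/2<h<\lambda$. If $\eta\in\mathcal X$ contains either a cluster of pluses having a convex side of length $l_1<\frac{2J}{\lambda+h}$, or a cluster of minuses having a convex side of length $l_2<\frac{2J}{\lambda-h}$, then $V_\eta<2J$.
   Context: Let $\Lambda=\{1,\dots,L\}^2$, $\mathcal X=\{-1,0,+1\}^\Lambda$, $\partial^-\Lambda$ the sites of $\Lambda$ with a nearest neighbour outside $\Lambda$. Hamiltonian: $H(\eta)=\frac J2\sum_{i,j\in\Lambda,|i-j|=1}[\eta(i)-\eta(j)]^2+J\sum_{i\in\partial^-\Lambda}\sum_{j\notin\Lambda,|i-j|=1}\eta(i)^2-\lambda\sum_{i}\eta(i)^2-h\sum_i\eta(i)$. Condition (C): $J$ sufficiently large compared to $\lambda,h>0$; $L>(2J/(\lambda-h))^3$; none of $\tfrac{2J}{\lambda+h},\tfrac{2J}{\lambda-h},\tfrac{2J+\lambda-h}{\lambda+h},\tfrac{J+\lambda+h}{h}$ is an integer. Clusters of pluses (resp. minuses) of $\eta$ are the maximal connected components of the union of the closed unit squares centred at sites with spin $+1$ (resp. $-1$). The boundary of a cluster is a union of maximal straight segments (sides); the length of a side is the number of unit edges it contains. A corner of the boundary is convex if the interior angle of the cluster there is a right angle, concave otherwise; a side is convex if both its endpoints are convex corners. $V_\eta=\Phi(\eta,\{\zeta:H(\zeta)<H(\eta)\})-H(\eta)$, where $\Phi(\eta,A)$ is the minimum over paths (sequences of single-site changes) from $\eta$ to $A$ of the max of $H$ along the path. *)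

theory Defs
  imports Complex_Main
begin

type_synonym site = "int \<times> int"
type_synonym config = "site \<Rightarrow> int"

definition Lam :: "nat \<Rightarrow> site set" where
  "Lam L = {1..int L} \<times> {1..int L}"

definition nn :: "site \<Rightarrow> site \<Rightarrow> bool" where
  "nn i j \<longleftrightarrow> \<bar>fst i - fst j\<bar> + \<bar>snd i - snd j\<bar> = 1"

definition inner_boundary :: "nat \<Rightarrow> site set" where
  "inner_boundary L = {i \<in> Lam L. \<exists>j. nn i j \<and> j \<notin> Lam L}"

text \<open>State space: spins in {-1,0,1} on Lam L, and 0 outside (irrelevant padding).\<close>
definition Xsp :: "nat \<Rightarrow> config set" where
  "Xsp L = {\<eta>. (\<forall>i \<in> Lam L. \<eta> i \<in> {-1, 0, 1}) \<and> (\<forall>i. i \<notin> Lam L \<longrightarrow> \<eta> i = 0)}"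

definition Ham :: "real \<Rightarrow> real \<Rightarrow> real \<Rightarrow> nat \<Rightarrow> config \<Rightarrow> real" where
  "Ham J lam h L \<eta> =
     J / 2 * (\<Sum>(i, j) \<in> {(i, j). i \<in> Lam L \<and> j \<in> Lam L \<and> nn i j}. (real_of_int (\<eta> i - \<eta> j))\<^sup>2)
   + J * (\<Sum>i \<in> inner_boundary L. \<Sum>j \<in> {j. j \<notin> Lam L \<and> nn i j}. (real_of_int (\<eta> i))\<^sup>2)
   - lam * (\<Sum>i \<in> Lam L. (real_of_int (\<eta> i))\<^sup>2)
   - h * (\<Sum>i \<in> Lam L. real_of_int (\<eta> i))"

definition single_site :: "config \<Rightarrow> config \<Rightarrow> bool" where
  "single_site \<eta> \<zeta> \<longleftrightarrow> (\<exists>i. \<forall>j. j \<noteq> i \<longrightarrow> \<eta> j = \<zeta> j)"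

definition is_path :: "nat \<Rightarrow> config list \<Rightarrow> config \<Rightarrow> config set \<Rightarrow> bool" where
  "is_path L \<omega> \<eta> A \<longleftrightarrow> \<omega> \<noteq> [] \<and> hd \<omega> = \<eta> \<and> last \<omega> \<in> A \<and> set \<omega> \<subseteq> Xsp L
     \<and> (\<forall>k. Suc k < length \<omega> \<longrightarrow> single_site (\<omega> ! k) (\<omega> ! Suc k))"

definition Phi :: "real \<Rightarrow> real \<Rightarrow> real \<Rightarrow> nat \<Rightarrow> config \<Rightarrow> config set \<Rightarrow> real" where
  "Phi J lam h L \<eta> A = Inf {Max (Ham J lam h L ` set \<omega>) | \<omega>. is_path L \<omega> \<eta> A}"

definition Vstab :: "real \<Rightarrow> real \<Rightarrow> real \<Rightarrow> nat \<Rightarrow> config \<Rightarrow> real" where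
  "Vstab J lam h L \<eta> =
     Phi J lam h L \<eta> {\<zeta> \<in> Xsp L. Ham J lam h L \<zeta> < Ham J lam h L \<eta>} - Ham J lam h L \<eta>"

text \<open>Two closed unit squares centred at sites intersect iff the sites are
  at sup-distance at most 1 (they share an edge or a corner).  Clusters of spin s
  are the connected components of the union of the squares of the s-sites, i.e.
  the equivalence classes of this adjacency on the s-sites.\<close>
definition touch :: "site \<Rightarrow> site \<Rightarrow> bool" where
  "touch i j \<longleftrightarrow> i \<noteq> j \<and> \<bar>fst i - fst j\<bar> \<le> 1 \<and> \<bar>snd i - snd j\<bar> \<le> 1"

definition spin_sites :: "nat \<Rightarrow> config \<Rightarrow> int \<Rightarrow> site set" where
  "spin_sites L \<eta> s = {i \<in> Lam L. \<eta> i = s}"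

definition clusters :: "nat \<Rightarrow> config \<Rightarrow> int \<Rightarrow> site set set" where
  "clusters L \<eta> s = {{j. (\<lambda>a b. a \<in> spin_sites L \<eta> s \<and> b \<in> spin_sites L \<eta> s \<and> touch a b)\<^sup>*\<^sup>* i j}
                      | i. i \<in> spin_sites L \<eta> s}"

text \<open>The cluster C has a convex side of length l: there is a row of l sites
  p, p+t, ..., p+(l-1)t of C (t a unit lattice vector, d a unit vector orthogonal
  to t pointing outward) such that the squares of the l sites p+kt+d are not in C
  (so the segment of length l between them is in the boundary), and both endpoints
  are convex corners, i.e. near each endpoint only the square of the end site of the
  row belongs to C (the three other squares meeting at that corner are not in C).\<close>
definition unit_dirs :: "site set" where
  "unit_dirs = {(1, 0), (-1, 0), (0, 1), (0, -1)}"

definition convex_side :: "site set \<Rightarrow> nat \<Rightarrow> bool" where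
  "convex_side C l \<longleftrightarrow> l \<ge> 1 \<and>
    (\<exists>p t d. t \<in> unit_dirs \<and> d \<in> unit_dirs \<and> fst t * fst d + snd t * snd d = 0 \<and>
      (let pt = (\<lambda>k::int. (fst p + k * fst t, snd p + k * snd t));
           up = (\<lambda>q::site. (fst q + fst d, snd q + snd d)) in
        (\<forall>k. 0 \<le> k \<and> k < int l \<longrightarrow> pt k \<in> C \<and> up (pt k) \<notin> C)
        \<and> pt (-1) \<notin> C \<and> up (pt (-1)) \<notin> C
        \<and> pt (int l) \<notin> C \<and> up (pt (int l)) \<notin> C))"

definition condition_C_arith :: "real \<Rightarrow> real \<Rightarrow> real \<Rightarrow> nat \<Rightarrow> bool" where
  "condition_C_arith J lam h L \<longleftrightarrow>
     real L > (2 * J / (lam - h)) ^ 3 \<and>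
     2 * J / (lam + h) \<notin> \<int> \<and> 2 * J / (lam - h) \<notin> \<int> \<and>
     (2 * J + lam - h) / (lam + h) \<notin> \<int> \<and> (J + lam + h) / h \<notin> \<int>"

end

(* Erase the spins of the convex side one at a time, starting at one end.  Turning a spin s into 0
   changes the field terms by lam + h s > 0 and the interaction by J times a sum over the four
   neighbours that is at most 0, since the outward neighbour and the previously erased (or corner)
   neighbour do not carry spin s.  When the last site of the side is erased, its successor along the
   side does not carry s either, so that step lowers the energy by at least 2J - (lam + h s).  The path
   therefore rises by at most (l - 1)(lam + h s) < 2J above its start and ends below it. *)

theory Submission
  imports Defs
begin

lemma nn_sym: "nn a b \<longleftrightarrow> nn b a"
  unfolding nn_def by (simp add: abs_minus_commute)

lemma nn_irrefl: "\<not> nn a a"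
  unfolding nn_def by simp

lemma nn_neighbours: "{b. nn (x, y) b} = {(x + 1, y), (x - 1, y), (x, y + 1), (x, y - 1)}"
proof (rule set_eqI)
  fix b :: site
  show "b \<in> {b. nn (x, y) b} \<longleftrightarrow> b \<in> {(x + 1, y), (x - 1, y), (x, y + 1), (x, y - 1)}"
    by (cases b) (auto simp: nn_def abs_if split: if_splits)
qed

lemma finite_neighbours: "finite {b. nn q b}"
  by (cases q) (simp add: nn_neighbours)

definition translate :: "site \<Rightarrow> int \<Rightarrow> site \<Rightarrow> site" where
  "translate q k u = (fst q + k * fst u, snd q + k * snd u)"

lemma translate_translate: "translate (translate q j u) k u = translate q (j + k) u"
  unfolding translate_def by (simp add: algebra_simps)

lemma translate_inj:
  assumes "u \<in> unit_dirs" and "translate q j u = translate q k u"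
  shows "j = k"
  using assms unfolding unit_dirs_def translate_def by auto

lemma touch_translate:
  assumes "u \<in> unit_dirs" and "k \<in> {1, -1}"
  shows "touch q (translate q k u)"
  using assms unfolding unit_dirs_def touch_def translate_def by (auto simp: prod_eq_iff)

lemma sum_neighbours_unit_dirs:
  assumes "t \<in> unit_dirs" "d \<in> unit_dirs" "fst t * fst d + snd t * snd d = 0"
  shows "(\<Sum>b\<in>{b. nn q b}. f b) = f (translate q 1 t) + f (translate q (-1) t)
        + f (translate q 1 d) + f (translate q (-1) d)"
  using assms by (cases q) (auto simp: nn_neighbours translate_def unit_dirs_def algebra_simps)

lemma finite_Lam: "finite (Lam L)"
  unfolding Lam_def by simp

lemma Xsp_values: "\<eta> \<in> Xsp L \<Longrightarrow> \<eta> x \<in> {-1, 0, 1}"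
  unfolding Xsp_def by (cases "x \<in> Lam L") blast+

lemma sum_fun_upd_diff:
  fixes g :: "'a \<Rightarrow> 'b \<Rightarrow> real"
  assumes "finite A"
  shows "(\<Sum>a\<in>A. g a ((\<eta>(i := v)) a)) - (\<Sum>a\<in>A. g a (\<eta> a))
         = (if i \<in> A then g i v - g i (\<eta> i) else 0)"
proof -
  have "(\<Sum>a\<in>A. g a ((\<eta>(i := v)) a)) - (\<Sum>a\<in>A. g a (\<eta> a))
        = (\<Sum>a\<in>A. if a = i then g i v - g i (\<eta> i) else 0)"
    unfolding sum_subtractf[symmetric] by (rule sum.cong) auto
  then show ?thesis using assms by simp
qed

abbreviation bond_change :: "config \<Rightarrow> site \<Rightarrow> int \<Rightarrow> site \<Rightarrow> real" where
  "bond_change \<eta> i v b \<equiv> (real_of_int (v - \<eta> b))\<^sup>2 - (real_of_int (\<eta> i - \<eta> b))\<^sup>2"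

lemma bulk_sum_fun_upd_diff:
  assumes i: "i \<in> Lam L"
  defines "P \<equiv> {(a, b). a \<in> Lam L \<and> b \<in> Lam L \<and> nn a b}"
  shows "(\<Sum>(a, b)\<in>P. (real_of_int ((\<eta>(i := v)) a - (\<eta>(i := v)) b))\<^sup>2)
           - (\<Sum>(a, b)\<in>P. (real_of_int (\<eta> a - \<eta> b))\<^sup>2)
         = 2 * (\<Sum>b\<in>{b \<in> Lam L. nn i b}. bond_change \<eta> i v b)"
proof -
  define N where "N = {b \<in> Lam L. nn i b}"
  define D where "D = (\<lambda>(a, b). (real_of_int ((\<eta>(i := v)) a - (\<eta>(i := v)) b))\<^sup>2
                                 - (real_of_int (\<eta> a - \<eta> b))\<^sup>2)"
  have fin_P: "finite P"
    unfolding P_def by (rule finite_subset[of _ "Lam L \<times> Lam L"]) (auto simp: finite_Lam)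
  have fin_N: "finite N"
    unfolding N_def by (rule finite_subset[OF _ finite_Lam]) auto
  have "(\<Sum>(a, b)\<in>P. (real_of_int ((\<eta>(i := v)) a - (\<eta>(i := v)) b))\<^sup>2)
          - (\<Sum>(a, b)\<in>P. (real_of_int (\<eta> a - \<eta> b))\<^sup>2) = sum D P"
    unfolding D_def by (simp add: sum_subtractf case_prod_unfold)
  also have "\<dots> = sum D (Pair i ` N \<union> (\<lambda>a. (a, i)) ` N)"
  proof (rule sum.mono_neutral_right[OF fin_P])
    show "Pair i ` N \<union> (\<lambda>a. (a, i)) ` N \<subseteq> P"
      unfolding N_def P_def using i by (auto simp: nn_sym)
    show "\<forall>x\<in>P - (Pair i ` N \<union> (\<lambda>a. (a, i)) ` N). D x = 0"
    proof
      fix x assume x: "x \<in> P - (Pair i ` N \<union> (\<lambda>a. (a, i)) ` N)"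
      then have "fst x \<noteq> i" "snd x \<noteq> i"
        unfolding P_def N_def by (auto simp: nn_sym)
      then show "D x = 0" unfolding D_def by (simp add: case_prod_unfold)
    qed
  qed
  also have "\<dots> = (\<Sum>b\<in>N. D (i, b)) + (\<Sum>b\<in>N. D (b, i))"
    using fin_N by (subst sum.union_disjoint) (auto simp: N_def nn_irrefl sum.reindex inj_on_def)
  also have "\<dots> = 2 * (\<Sum>b\<in>N. bond_change \<eta> i v b)"
  proof -
    have "D (i, b) = bond_change \<eta> i v b \<and> D (b, i) = bond_change \<eta> i v b" if "b \<in> N" for b
      using that nn_irrefl[of i] unfolding N_def D_def by (auto simp: power2_commute)
    then show ?thesis by simp
  qed
  finally show ?thesis unfolding N_def .
qed

lemma boundary_sum_fun_upd_diff:
  assumes i: "i \<in> Lam L" and outside: "\<forall>x. x \<notin> Lam L \<longrightarrow> \<eta> x = 0"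
  defines "N \<equiv> \<lambda>a. {b. b \<notin> Lam L \<and> nn a b}"
  shows "(\<Sum>a\<in>inner_boundary L. \<Sum>b\<in>N a. (real_of_int ((\<eta>(i := v)) a))\<^sup>2)
           - (\<Sum>a\<in>inner_boundary L. \<Sum>b\<in>N a. (real_of_int (\<eta> a))\<^sup>2)
         = (\<Sum>b\<in>N i. bond_change \<eta> i v b)"
proof -
  have "finite (inner_boundary L)"
    unfolding inner_boundary_def by (rule finite_subset[OF _ finite_Lam]) auto
  from sum_fun_upd_diff[OF this, of "\<lambda>a x. \<Sum>b\<in>N a. (real_of_int x)\<^sup>2" \<eta> i v]
  have "(\<Sum>a\<in>inner_boundary L. \<Sum>b\<in>N a. (real_of_int ((\<eta>(i := v)) a))\<^sup>2)
           - (\<Sum>a\<in>inner_boundary L. \<Sum>b\<in>N a. (real_of_int (\<eta> a))\<^sup>2)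
         = (if i \<in> inner_boundary L then (\<Sum>b\<in>N i. (real_of_int v)\<^sup>2 - (real_of_int (\<eta> i))\<^sup>2) else 0)"
    by (simp only: sum_subtractf)
  moreover have "i \<notin> inner_boundary L \<Longrightarrow> N i = {}"
    using i unfolding inner_boundary_def N_def by auto
  moreover have "(\<Sum>b\<in>N i. (real_of_int v)\<^sup>2 - (real_of_int (\<eta> i))\<^sup>2) = (\<Sum>b\<in>N i. bond_change \<eta> i v b)"
    using outside unfolding N_def by (intro sum.cong) auto
  ultimately show ?thesis by (cases "i \<in> inner_boundary L") auto
qed

lemma Ham_fun_upd_diff:
  assumes i: "i \<in> Lam L" and outside: "\<forall>x. x \<notin> Lam L \<longrightarrow> \<eta> x = 0"
  shows "Ham J lam h L (\<eta>(i := v)) - Ham J lam h L \<eta> =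
     J * (\<Sum>b\<in>{b. nn i b}. bond_change \<eta> i v b)
     - lam * ((real_of_int v)\<^sup>2 - (real_of_int (\<eta> i))\<^sup>2) - h * (real_of_int v - real_of_int (\<eta> i))"
proof -
  have "{b. nn i b} = {b \<in> Lam L. nn i b} \<union> {b. b \<notin> Lam L \<and> nn i b}" by blast
  moreover have "finite {b \<in> Lam L. nn i b}" "finite {b. b \<notin> Lam L \<and> nn i b}"
    using finite_neighbours[of i] by (auto intro: finite_subset)
  ultimately have split: "(\<Sum>b\<in>{b. nn i b}. bond_change \<eta> i v b)
      = (\<Sum>b\<in>{b \<in> Lam L. nn i b}. bond_change \<eta> i v b)
        + (\<Sum>b\<in>{b. b \<notin> Lam L \<and> nn i b}. bond_change \<eta> i v b)"
    by (simp only:) (rule sum.union_disjoint; blast)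
  show ?thesis
    unfolding Ham_def split
      bulk_sum_fun_upd_diff[OF i, unfolded diff_eq_eq]
      boundary_sum_fun_upd_diff[OF i outside, unfolded diff_eq_eq]
      sum_fun_upd_diff[OF finite_Lam, of "\<lambda>_ x. (real_of_int x)\<^sup>2" \<eta> i v, unfolded diff_eq_eq]
      sum_fun_upd_diff[OF finite_Lam, of "\<lambda>_ x. real_of_int x" \<eta> i v, unfolded diff_eq_eq]
    using i by (simp add: algebra_simps)
qed

lemma cluster_subset_spin_sites:
  assumes "C \<in> clusters L \<eta> s"
  shows "C \<subseteq> spin_sites L \<eta> s"
proof
  fix x assume "x \<in> C"
  with assms obtain i where i: "i \<in> spin_sites L \<eta> s"
    and star: "(\<lambda>a b. a \<in> spin_sites L \<eta> s \<and> b \<in> spin_sites L \<eta> s \<and> touch a b)\<^sup>*\<^sup>* i x"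
    unfolding clusters_def by blast
  from star show "x \<in> spin_sites L \<eta> s" using i by (cases rule: rtranclp.cases) auto
qed

lemma cluster_closed_touch:
  assumes C: "C \<in> clusters L \<eta> s" and a: "a \<in> C" and b: "b \<in> spin_sites L \<eta> s"
    and "touch a b"
  shows "b \<in> C"
proof -
  let ?R = "\<lambda>a b. a \<in> spin_sites L \<eta> s \<and> b \<in> spin_sites L \<eta> s \<and> touch a b"
  from C obtain i where C_eq: "C = {j. ?R\<^sup>*\<^sup>* i j}"
    unfolding clusters_def by blast
  have "a \<in> spin_sites L \<eta> s" using cluster_subset_spin_sites[OF C] a by blast
  with a b \<open>touch a b\<close> have "?R\<^sup>*\<^sup>* i b"
    unfolding C_eq by (auto intro: rtranclp.rtrancl_into_rtrancl)
  then show ?thesis unfolding C_eq by blast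
qed

lemma spin_ne_touching_cluster:
  assumes C: "C \<in> clusters L \<eta> s" and "\<eta> \<in> Xsp L" and "s \<noteq> 0"
    and "a \<in> C" and "x \<notin> C" and "touch a x"
  shows "\<eta> x \<noteq> s"
proof
  assume "\<eta> x = s"
  moreover have "x \<in> Lam L"
    using \<open>\<eta> \<in> Xsp L\<close> \<open>s \<noteq> 0\<close> calculation unfolding Xsp_def by blast
  ultimately have "x \<in> spin_sites L \<eta> s"
    unfolding spin_sites_def by blast
  with cluster_closed_touch[OF C] assms show False by blast
qed

lemma bond_change_erase_le:
  assumes "\<eta> i \<in> {1, -1}" and "\<eta> b \<in> {-1, 0, 1}"
  shows "bond_change \<eta> i 0 b \<le> 1"
  using assms by auto

lemma bond_change_erase_le_neg:
  assumes "\<eta> i \<in> {1, -1}" and "\<eta> b \<in> {-1, 0, 1}" and "\<eta> b \<noteq> \<eta> i"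
  shows "bond_change \<eta> i 0 b \<le> -1"
  using assms by auto

lemma Phi_le_path_Max:
  assumes "is_path L \<omega> \<eta> A"
  shows "Phi J lam h L \<eta> A \<le> Max (Ham J lam h L ` set \<omega>)"
  unfolding Phi_def
proof (rule cInf_lower)
  show "Max (Ham J lam h L ` set \<omega>) \<in> {Max (Ham J lam h L ` set \<omega>) |\<omega>. is_path L \<omega> \<eta> A}"
    using assms by blast
  show "bdd_below {Max (Ham J lam h L ` set \<omega>) |\<omega>. is_path L \<omega> \<eta> A}"
  proof (rule bdd_belowI)
    fix m assume "m \<in> {Max (Ham J lam h L ` set \<omega>) |\<omega>. is_path L \<omega> \<eta> A}"
    then obtain \<omega>' where "m = Max (Ham J lam h L ` set \<omega>')" and "is_path L \<omega>' \<eta> A"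
      by blast
    then show "Ham J lam h L \<eta> \<le> m"
      unfolding is_path_def by (metis List.finite_set Max_ge finite_imageI hd_in_set imageI)
  qed
qed

lemma Vstab_le_of_chain:
  assumes start: "E 0 = \<eta>"
    and steps: "\<And>k. k < n \<Longrightarrow> single_site (E k) (E (Suc k))"
    and states: "\<And>k. k \<le> n \<Longrightarrow> E k \<in> Xsp L"
    and descent: "Ham J lam h L (E n) < Ham J lam h L \<eta>"
    and barrier: "\<And>k. k \<le> n \<Longrightarrow> Ham J lam h L (E k) \<le> Ham J lam h L \<eta> + M"
  shows "Vstab J lam h L \<eta> \<le> M"
proof -
  define \<omega> where "\<omega> = map E [0..<Suc n]"
  have set_\<omega>: "set \<omega> = E ` {..n}"
    unfolding \<omega>_def by (auto simp del: upt_Suc)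
  have "is_path L \<omega> \<eta> {\<zeta> \<in> Xsp L. Ham J lam h L \<zeta> < Ham J lam h L \<eta>}"
    unfolding is_path_def
  proof (intro conjI allI impI)
    show "\<omega> \<noteq> []" "hd \<omega> = \<eta>"
      unfolding \<omega>_def using start by (simp_all add: hd_map upt_conv_Cons del: upt_Suc)
    show "last \<omega> \<in> {\<zeta> \<in> Xsp L. Ham J lam h L \<zeta> < Ham J lam h L \<eta>}"
      unfolding \<omega>_def using descent states by (simp add: last_map)
    show "set \<omega> \<subseteq> Xsp L"
      unfolding set_\<omega> using states by auto
    show "single_site (\<omega> ! k) (\<omega> ! Suc k)" if "Suc k < length \<omega>" for k
      using that steps unfolding \<omega>_def by (simp del: upt_Suc)
  qed
  then have "Phi J lam h L \<eta> {\<zeta> \<in> Xsp L. Ham J lam h L \<zeta> < Ham J lam h L \<eta>}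
      \<le> Max (Ham J lam h L ` set \<omega>)"
    by (rule Phi_le_path_Max)
  also have "\<dots> \<le> Ham J lam h L \<eta> + M"
    unfolding set_\<omega> using barrier by (simp add: image_image)
  finally show ?thesis
    unfolding Vstab_def by simp
qed

definition erase :: "site set \<Rightarrow> config \<Rightarrow> config" where
  "erase S \<eta> x = (if x \<in> S then 0 else \<eta> x)"

locale cluster_convex_side =
  fixes L :: nat and \<eta> :: config and s :: int and C :: "site set" and l :: nat and p t d :: site
  assumes config: "\<eta> \<in> Xsp L" and spin: "s \<in> {1, -1}" and cluster: "C \<in> clusters L \<eta> s"
    and length_pos: "1 \<le> l"
    and dirs: "t \<in> unit_dirs" "d \<in> unit_dirs" "fst t * fst d + snd t * snd d = 0"
    and side_in: "\<And>k. 0 \<le> k \<Longrightarrow> k < int l \<Longrightarrow> translate p k t \<in> C"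
    and side_out: "\<And>k. 0 \<le> k \<Longrightarrow> k < int l \<Longrightarrow> translate (translate p k t) 1 d \<notin> C"
    and ends_out: "translate p (-1) t \<notin> C" "translate p (int l) t \<notin> C"
begin

abbreviation pt :: "int \<Rightarrow> site" where
  "pt k \<equiv> translate p k t"

definition erased :: "nat \<Rightarrow> config" where
  "erased k = erase (pt ` {0..<int k}) \<eta>"

lemma erased_0: "erased 0 = \<eta>"
  unfolding erased_def erase_def by (simp add: fun_eq_iff)

lemma erased_Suc: "erased (Suc k) = (erased k)(pt (int k) := 0)"
proof -
  have "{0..<int (Suc k)} = insert (int k) {0..<int k}" by auto
  then show ?thesis unfolding erased_def erase_def by (auto simp: fun_eq_iff)
qed

lemma erased_in_Xsp: "erased k \<in> Xsp L"
  using config unfolding erased_def erase_def Xsp_def by auto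

lemma in_cluster_spin: "x \<in> C \<Longrightarrow> x \<in> Lam L \<and> \<eta> x = s"
  using cluster_subset_spin_sites[OF cluster] unfolding spin_sites_def by blast

lemma erased_off_side: "x \<notin> pt ` {0..<int k} \<Longrightarrow> erased k x = \<eta> x"
  unfolding erased_def erase_def by simp

lemma erased_ne_spin:
  assumes "x \<in> pt ` {0..<int k} \<or> (x \<notin> C \<and> y \<in> C \<and> touch y x)"
  shows "erased k x \<noteq> s"
proof (cases "x \<in> pt ` {0..<int k}")
  case True
  then show ?thesis using spin unfolding erased_def erase_def by auto
next
  case False
  then have "x \<notin> C" "y \<in> C" "touch y x" using assms by auto
  moreover have "s \<noteq> 0" using spin by auto
  ultimately have "\<eta> x \<noteq> s"
    using spin_ne_touching_cluster[OF cluster config] by blast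
  then show ?thesis using erased_off_side[OF False] by simp
qed

lemma erase_step_energy:
  fixes J lam h :: real
  assumes J: "0 \<le> J" and k: "k < l"
  shows "Ham J lam h L (erased (Suc k))
         \<le> Ham J lam h L (erased k) + (lam + h * s) - (if Suc k = l then 2 * J else 0)"
proof -
  define q where "q = pt (int k)"
  define bc where "bc = bond_change (erased k) q 0"
  have q_C: "q \<in> C" using side_in[of "int k"] k unfolding q_def by simp
  have q_not_erased: "q \<notin> pt ` {0..<int k}"
  proof
    assume "q \<in> pt ` {0..<int k}"
    then obtain j where "j < int k" "pt j = pt (int k)" unfolding q_def by auto
    then show False using translate_inj[OF dirs(1)] by blast
  qed
  have spin_q: "erased k q = s"
    using in_cluster_spin[OF q_C] erased_off_side[OF q_not_erased] by simp
  have vals: "erased k b \<in> {-1, 0, 1}" for b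
    using Xsp_values[OF erased_in_Xsp] .
  have le_one: "bc b \<le> 1" for b
    unfolding bc_def by (rule bond_change_erase_le) (use spin spin_q vals in auto)
  have le_neg: "bc b \<le> -1" if "erased k b \<noteq> s" for b
    unfolding bc_def by (rule bond_change_erase_le_neg) (use spin spin_q vals that in auto)
  have next_site: "bc (pt (int k + 1)) \<le> (if Suc k = l then -1 else 1)"
  proof (cases "Suc k = l")
    case True
    then have "pt (int k + 1) = pt (int l)" by (metis of_nat_Suc add.commute)
    then have "erased k (pt (int k + 1)) \<noteq> s"
      using erased_ne_spin[of _ k q] ends_out(2) q_C touch_translate[OF dirs(1), of 1 q]
      unfolding q_def by (simp add: translate_translate)
    then show ?thesis using True le_neg by simp
  qed (use le_one in simp)
  have prev_site: "bc (pt (int k - 1)) \<le> -1"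
  proof (rule le_neg, cases "k = 0")
    case True
    then show "erased k (pt (int k - 1)) \<noteq> s"
      using erased_ne_spin[of _ k q] ends_out(1) q_C touch_translate[OF dirs(1), of "-1" q]
      unfolding q_def by (simp add: translate_translate)
  next
    case False
    then show "erased k (pt (int k - 1)) \<noteq> s"
      using erased_ne_spin[of "pt (int k - 1)" k q] by force
  qed
  have outer_site: "bc (translate q 1 d) \<le> -1"
    using le_neg erased_ne_spin[of _ k q] k side_out[of "int k"] q_C
      touch_translate[OF dirs(2), of 1 q] unfolding q_def by simp
  have "(\<Sum>b\<in>{b. nn q b}. bc b)
      = bc (pt (int k + 1)) + bc (pt (int k - 1)) + bc (translate q 1 d) + bc (translate q (-1) d)"
    using sum_neighbours_unit_dirs[OF dirs, of bc q]
    unfolding q_def by (simp add: translate_translate)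
  also have "\<dots> \<le> (if Suc k = l then -2 else 0)"
    using next_site prev_site outer_site le_one[of "translate q (-1) d"] by auto
  finally have "J * (\<Sum>b\<in>{b. nn q b}. bc b) \<le> J * (if Suc k = l then -2 else 0)"
    using J by (simp add: mult_left_mono)
  moreover have "Ham J lam h L (erased (Suc k)) - Ham J lam h L (erased k)
      = J * (\<Sum>b\<in>{b. nn q b}. bc b) + (lam + h * s)"
    using Ham_fun_upd_diff[of q L "erased k" J lam h 0] in_cluster_spin[OF q_C] erased_in_Xsp spin spin_q
    unfolding erased_Suc q_def[symmetric] bc_def Xsp_def by auto
  ultimately show ?thesis by (auto split: if_splits)
qed

lemma erased_energy:
  fixes J lam h :: real
  assumes "0 \<le> J" and "k \<le> l"
  shows "Ham J lam h L (erased k)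
         \<le> Ham J lam h L \<eta> + real k * (lam + h * s) - (if k = l then 2 * J else 0)"
  using assms(2)
proof (induction k)
  case 0
  then show ?case using length_pos erased_0 by simp
next
  case (Suc k)
  then have "Ham J lam h L (erased k) \<le> Ham J lam h L \<eta> + real k * (lam + h * s)" by simp
  with erase_step_energy[OF assms(1), of k lam h] Suc.prems show ?case
    by (cases "Suc k = l") (auto simp: algebra_simps)
qed

lemma Vstab_lt_if_short_side:
  fixes J lam h :: real
  assumes J: "0 \<le> J" and pos: "0 < lam + h * s" and short: "real l * (lam + h * s) < 2 * J"
  shows "Vstab J lam h L \<eta> < 2 * J"
proof -
  let ?c = "lam + h * s"
  have "Vstab J lam h L \<eta> \<le> (real l - 1) * ?c"
  proof (rule Vstab_le_of_chain[where E = erased and n = l])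
    show "erased 0 = \<eta>" by (rule erased_0)
    show "single_site (erased k) (erased (Suc k))" for k
      unfolding single_site_def erased_Suc by (intro exI[of _ "pt (int k)"]) simp
    show "erased k \<in> Xsp L" for k by (rule erased_in_Xsp)
    show "Ham J lam h L (erased l) < Ham J lam h L \<eta>"
      using erased_energy[OF J order_refl, where lam = lam and h = h] short by simp
    show "Ham J lam h L (erased k) \<le> Ham J lam h L \<eta> + (real l - 1) * ?c" if "k \<le> l" for k
    proof (cases "k = l")
      case True
      have "?c \<le> real l * ?c" using length_pos pos by simp
      then show ?thesis
        using True erased_energy[OF J that, where lam = lam and h = h] short by (simp add: algebra_simps)
    next
      case False
      with that have "real k * ?c \<le> (real l - 1) * ?c" using pos by (intro mult_right_mono) auto
      then show ?thesis using erased_energy[OF J that, where lam = lam and h = h] False by simp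
    qed
  qed
  also have "\<dots> < 2 * J" using pos short by (simp add: algebra_simps)
  finally show ?thesis .
qed

end

lemma cluster_convex_side_of_convex_side:
  assumes side: "convex_side C l" and "\<eta> \<in> Xsp L" and "s \<in> {1, -1}" and "C \<in> clusters L \<eta> s"
  obtains p t d where "cluster_convex_side L \<eta> s C l p t d"
proof -
  from side obtain p t d where "l \<ge> 1" "t \<in> unit_dirs" "d \<in> unit_dirs"
    "fst t * fst d + snd t * snd d = 0"
    "let pt = (\<lambda>k::int. (fst p + k * fst t, snd p + k * snd t));
           up = (\<lambda>q::site. (fst q + fst d, snd q + snd d)) in
        (\<forall>k. 0 \<le> k \<and> k < int l \<longrightarrow> pt k \<in> C \<and> up (pt k) \<notin> C)
        \<and> pt (-1) \<notin> C \<and> pt (int l) \<notin> C"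
    unfolding convex_side_def Let_def by auto
  with assms have "cluster_convex_side L \<eta> s C l p t d"
    unfolding cluster_convex_side_def translate_def Let_def by auto
  then show ?thesis by (rule that)
qed

lemma Vstab_lt_of_short_convex_side:
  fixes J lam h :: real
  assumes "0 \<le> J" and "\<eta> \<in> Xsp L" and "s \<in> {1, -1}" and "C \<in> clusters L \<eta> s"
    and "convex_side C l" and "0 < lam + h * s" and "real l * (lam + h * s) < 2 * J"
  shows "Vstab J lam h L \<eta> < 2 * J"
  using assms cluster_convex_side_of_convex_side cluster_convex_side.Vstab_lt_if_short_side by metis

theorem lemma4p3:
  fixes lam h :: real
  assumes "0 < h" and "lam / 2 < h" and "h < lam"
  shows "\<exists>J0. \<forall>J L \<eta>. J > J0 \<and> condition_C_arith J lam h L \<and> \<eta> \<in> Xsp L \<and>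
           ((\<exists>C \<in> clusters L \<eta> 1. \<exists>l1. convex_side C l1 \<and> real l1 < 2 * J / (lam + h)) \<or>
            (\<exists>C \<in> clusters L \<eta> (-1). \<exists>l2. convex_side C l2 \<and> real l2 < 2 * J / (lam - h)))
           \<longrightarrow> Vstab J lam h L \<eta> < 2 * J"
proof (intro exI[of _ 0] allI impI, elim conjE disjE bexE exE)
  show "Vstab J lam h L \<eta> < 2 * J"
    if "0 < J" "\<eta> \<in> Xsp L" "C \<in> clusters L \<eta> 1" "convex_side C l" "real l < 2 * J / (lam + h)"
    for J L \<eta> C l
    using that assms Vstab_lt_of_short_convex_side[where s = 1] by (simp add: pos_less_divide_eq)
  show "Vstab J lam h L \<eta> < 2 * J"
    if "0 < J" "\<eta> \<in> Xsp L" "C \<in> clusters L \<eta> (-1)" "convex_side C l" "real l < 2 * J / (lam - h)"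
    for J L \<eta> C l
    using that assms Vstab_lt_of_short_convex_side[where s = "-1"] by (simp add: pos_less_divide_eq)
qed

end
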